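(* Let $n=2$ and let $t\mapsto (q(t),p(t))$, $t\ge0$, be a solution of $\dot q_i=\partial H/\partial p_i$, $\dot p_i=-\partial H/\partial q_i$, $H=\frac12\sum_{i,j=1}^2p_ip_je^{-|q_i-q_j|}$, with $q_1(0)>q_2(0)$, normalized so that $H_1:=p_1^2+p_2^2+2p_1p_2e^{-|q_1-q_2|}=1$ (equivalently the corresponding geodesic of $g=(e^{-|q_i-q_j|})^{-1}$ has unit speed). If $|p_1+p_2|>1$, or if $p_1-p_2>0$ at $t=0$, then the trajectory never approaches the singular set $\{q_1=q_2\}$; consequently the corresponding 2-peakon solution $u=p_1e^{-|x-q_1|}+p_2e^{-|x-q_2|}$ of the Camassa-Holm equation has no collision.
   Context: The quantity $p_1+p_2$ is constant along solutions. *)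

theory Defs
  imports "HOL-Analysis.Analysis"
begin

definition H :: "(nat \<Rightarrow> real) \<Rightarrow> (nat \<Rightarrow> real) \<Rightarrow> real" where
  "H q p = (1/2) * (\<Sum>i\<in>{1,2::nat}. \<Sum>j\<in>{1,2::nat}. p i * p j * exp (- \<bar>q i - q j\<bar>))"

definition hamiltonian_solution :: "(real \<Rightarrow> nat \<Rightarrow> real) \<Rightarrow> (real \<Rightarrow> nat \<Rightarrow> real) \<Rightarrow> bool" where
  "hamiltonian_solution q p \<longleftrightarrow>
     (\<forall>t\<ge>0. \<forall>i\<in>{1,2::nat}. \<exists>a b.
        ((\<lambda>x. H (q t) ((p t)(i := x))) has_real_derivative a) (at (p t i)) \<and>
        ((\<lambda>x. H ((q t)(i := x)) (p t)) has_real_derivative b) (at (q t i)) \<and>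
        ((\<lambda>s. q s i) has_real_derivative a) (at t within {0..}) \<and>
        ((\<lambda>s. p s i) has_real_derivative (- b)) (at t within {0..}))"

end

theory Submission
  imports Defs
begin

(* While q1 > q2, the total momentum s = p1 + p2 and the energy
   H1 = p1^2 + p2^2 + 2 p1 p2 exp(-r), r = q1 - q2, are conserved, and
     s^2 (1 + exp(-r)) + (p1 - p2)^2 (1 - exp(-r)) = 2 H1 = 2.
   If |s| > 1 this forces exp(-r) <= 2/s^2 - 1 < 1, a uniform lower bound on r.
   If |s| <= 1 the identity forbids p1 = p2, so p1 - p2 keeps its initial positive sign
   and r' = (p1 - p2)(1 - exp(-r)) >= 0, whence r >= r(0). Either bound holds on every
   time interval free of collisions, and a continuity argument shows that no collision
   ever happens. *)

lemma H_two_particles: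
  "H q p = ((p 1)\<^sup>2 + (p 2)\<^sup>2 + 2 * p 1 * p 2 * exp (- \<bar>q 1 - q 2\<bar>)) / 2"
  by (simp add: H_def abs_minus_commute power2_eq_square algebra_simps)

lemma has_real_derivative_H_momentum1:
  "((\<lambda>x. H Q (P(1 := x))) has_real_derivative P 1 + P 2 * exp (- \<bar>Q 1 - Q 2\<bar>)) (at (P 1))"
  unfolding H_two_particles by (auto intro!: derivative_eq_intros simp: algebra_simps)

lemma has_real_derivative_H_momentum2:
  "((\<lambda>x. H Q (P(2 := x))) has_real_derivative P 2 + P 1 * exp (- \<bar>Q 1 - Q 2\<bar>)) (at (P 2))"
  unfolding H_two_particles by (auto intro!: derivative_eq_intros simp: algebra_simps)

lemma has_real_derivative_H_position1:
  assumes "Q 2 < Q 1"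
  shows "((\<lambda>x. H (Q(1 := x)) P) has_real_derivative - (P 1 * P 2 * exp (- (Q 1 - Q 2)))) (at (Q 1))"
proof (rule has_field_derivative_transform_within_open[where S = "{Q 2<..}"])
  show "((\<lambda>x. ((P 1)\<^sup>2 + (P 2)\<^sup>2 + 2 * P 1 * P 2 * exp (- (x - Q 2))) / 2)
      has_real_derivative - (P 1 * P 2 * exp (- (Q 1 - Q 2)))) (at (Q 1))"
    by (auto intro!: derivative_eq_intros simp: algebra_simps)
qed (use assms in \<open>auto simp: H_two_particles\<close>)

lemma has_real_derivative_H_position2:
  assumes "Q 2 < Q 1"
  shows "((\<lambda>x. H (Q(2 := x)) P) has_real_derivative P 1 * P 2 * exp (- (Q 1 - Q 2))) (at (Q 2))"
proof (rule has_field_derivative_transform_within_open[where S = "{..<Q 1}"])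
  show "((\<lambda>x. ((P 1)\<^sup>2 + (P 2)\<^sup>2 + 2 * P 1 * P 2 * exp (- (Q 1 - x))) / 2)
      has_real_derivative P 1 * P 2 * exp (- (Q 1 - Q 2))) (at (Q 2))"
    by (auto intro!: derivative_eq_intros simp: algebra_simps)
qed (use assms in \<open>auto simp: H_two_particles abs_minus_commute\<close>)

lemma hamiltonian_solution_peakon_ode:
  assumes sol: "hamiltonian_solution q p" and "0 \<le> t" and ordered: "q t 2 < q t 1"
  defines "E \<equiv> exp (- (q t 1 - q t 2))"
  shows "((\<lambda>s. q s 1) has_real_derivative p t 1 + p t 2 * E) (at t within {0..})"
    and "((\<lambda>s. q s 2) has_real_derivative p t 2 + p t 1 * E) (at t within {0..})"
    and "((\<lambda>s. p s 1) has_real_derivative p t 1 * p t 2 * E) (at t within {0..})"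
    and "((\<lambda>s. p s 2) has_real_derivative - (p t 1 * p t 2 * E)) (at t within {0..})"
proof -
  have E: "exp (- \<bar>q t 1 - q t 2\<bar>) = E"
    using ordered by (simp add: E_def)
  obtain a b where
      "((\<lambda>x. H (q t) ((p t)(1 := x))) has_real_derivative a) (at (p t 1))"
      "((\<lambda>x. H ((q t)(1 := x)) (p t)) has_real_derivative b) (at (q t 1))"
      "((\<lambda>s. q s 1) has_real_derivative a) (at t within {0..})"
      "((\<lambda>s. p s 1) has_real_derivative - b) (at t within {0..})"
    using sol \<open>0 \<le> t\<close> unfolding hamiltonian_solution_def by blast
  moreover from this(1,2) have "a = p t 1 + p t 2 * E" "b = - (p t 1 * p t 2 * E)"
    using DERIV_unique has_real_derivative_H_momentum1 has_real_derivative_H_position1[OF ordered]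
    by (metis E, metis E_def)
  ultimately show "((\<lambda>s. q s 1) has_real_derivative p t 1 + p t 2 * E) (at t within {0..})"
    and "((\<lambda>s. p s 1) has_real_derivative p t 1 * p t 2 * E) (at t within {0..})"
    by simp_all
  obtain a b where
      "((\<lambda>x. H (q t) ((p t)(2 := x))) has_real_derivative a) (at (p t 2))"
      "((\<lambda>x. H ((q t)(2 := x)) (p t)) has_real_derivative b) (at (q t 2))"
      "((\<lambda>s. q s 2) has_real_derivative a) (at t within {0..})"
      "((\<lambda>s. p s 2) has_real_derivative - b) (at t within {0..})"
    using sol \<open>0 \<le> t\<close> unfolding hamiltonian_solution_def by blast
  moreover from this(1,2) have "a = p t 2 + p t 1 * E" "b = p t 1 * p t 2 * E"
    using DERIV_unique has_real_derivative_H_momentum2 has_real_derivative_H_position2[OF ordered]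
    by (metis E, metis E_def)
  ultimately show "((\<lambda>s. q s 2) has_real_derivative p t 2 + p t 1 * E) (at t within {0..})"
    and "((\<lambda>s. p s 2) has_real_derivative - (p t 1 * p t 2 * E)) (at t within {0..})"
    by simp_all
qed

lemma hamiltonian_solution_continuous_on:
  assumes sol: "hamiltonian_solution q p" and "i \<in> {1, 2}"
  shows "continuous_on {0..} (\<lambda>s. q s i)" and "continuous_on {0..} (\<lambda>s. p s i)"
proof -
  have "continuous (at t within {0..}) (\<lambda>s. q s i) \<and> continuous (at t within {0..}) (\<lambda>s. p s i)"
    if "t \<in> {0..}" for t
    using sol \<open>i \<in> {1, 2}\<close> that DERIV_continuous unfolding hamiltonian_solution_def by fastforce
  then show "continuous_on {0..} (\<lambda>s. q s i)" and "continuous_on {0..} (\<lambda>s. p s i)"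
    by (auto simp: continuous_on_eq_continuous_within)
qed

lemma zero_derivative_imp_eq_initial:
  fixes f :: "real \<Rightarrow> real"
  assumes "\<And>u. u \<in> {0..T} \<Longrightarrow> (f has_real_derivative 0) (at u within {0..T})" and "t \<in> {0..T}"
  shows "f t = f 0"
  using has_field_derivative_zero_constant[of "{0..T}" f] assms by fastforce

lemma
  assumes sol: "hamiltonian_solution q p" and ordered: "\<forall>u\<in>{0..T}. q u 2 < q u 1"
    and t: "t \<in> {0..T}"
  shows momentum_conserved: "p t 1 + p t 2 = p 0 1 + p 0 2"
    and energy_conserved: "(p t 1)\<^sup>2 + (p t 2)\<^sup>2 + 2 * p t 1 * p t 2 * exp (- (q t 1 - q t 2))
      = (p 0 1)\<^sup>2 + (p 0 2)\<^sup>2 + 2 * p 0 1 * p 0 2 * exp (- (q 0 1 - q 0 2))"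
proof -
  have ode: "((\<lambda>s. q s 1) has_real_derivative p u 1 + p u 2 * exp (- (q u 1 - q u 2))) (at u within {0..T})"
    "((\<lambda>s. q s 2) has_real_derivative p u 2 + p u 1 * exp (- (q u 1 - q u 2))) (at u within {0..T})"
    "((\<lambda>s. p s 1) has_real_derivative p u 1 * p u 2 * exp (- (q u 1 - q u 2))) (at u within {0..T})"
    "((\<lambda>s. p s 2) has_real_derivative - (p u 1 * p u 2 * exp (- (q u 1 - q u 2)))) (at u within {0..T})"
    if "u \<in> {0..T}" for u
    using hamiltonian_solution_peakon_ode[OF sol _ ordered[rule_format, OF that]] that
    by (auto intro: DERIV_subset)
  show "p t 1 + p t 2 = p 0 1 + p 0 2"
    by (rule zero_derivative_imp_eq_initial[OF _ t]) (use ode in \<open>auto intro!: derivative_eq_intros\<close>)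
  show "(p t 1)\<^sup>2 + (p t 2)\<^sup>2 + 2 * p t 1 * p t 2 * exp (- (q t 1 - q t 2))
      = (p 0 1)\<^sup>2 + (p 0 2)\<^sup>2 + 2 * p 0 1 * p 0 2 * exp (- (q 0 1 - q 0 2))"
  proof (rule zero_derivative_imp_eq_initial[OF _ t])
    fix u assume "u \<in> {0..T}"
    note D = ode[OF this]
    show "((\<lambda>t. (p t 1)\<^sup>2 + (p t 2)\<^sup>2 + 2 * p t 1 * p t 2 * exp (- (q t 1 - q t 2)))
        has_real_derivative 0) (at u within {0..T})"
      by (rule derivative_eq_intros D refl | simp add: algebra_simps)+
  qed
qed

lemma sum_difference_split:
  fixes a b E :: real
  shows "(a + b)\<^sup>2 * (1 + E) + (a - b)\<^sup>2 * (1 - E) = 2 * (a\<^sup>2 + b\<^sup>2 + 2 * a * b * E)"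
  by (simp add: power2_eq_square algebra_simps)

lemma collision_free_invariant:
  assumes sol: "hamiltonian_solution q p" and ordered: "\<forall>u\<in>{0..T}. q u 2 < q u 1"
    and norm: "(p 0 1)\<^sup>2 + (p 0 2)\<^sup>2 + 2 * p 0 1 * p 0 2 * exp (- \<bar>q 0 1 - q 0 2\<bar>) = 1"
    and t: "t \<in> {0..T}"
  shows "(p 0 1 + p 0 2)\<^sup>2 * (1 + exp (- (q t 1 - q t 2)))
    + (p t 1 - p t 2)\<^sup>2 * (1 - exp (- (q t 1 - q t 2))) = 2"
proof -
  have "q 0 2 < q 0 1"
    using ordered t by auto
  then show ?thesis
    using sum_difference_split[of "p t 1" "p t 2"] norm
      momentum_conserved[OF sol ordered t] energy_conserved[OF sol ordered t]
    by simp
qed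

lemma neg_ln_bound_of_invariant:
  fixes s d E :: real
  assumes "1 < \<bar>s\<bar>" "0 < E" "E < 1" and inv: "s\<^sup>2 * (1 + E) + d\<^sup>2 * (1 - E) = 2"
  shows "0 < - ln (2 / s\<^sup>2 - 1)" and "- ln (2 / s\<^sup>2 - 1) \<le> - ln E"
proof -
  have "1 < s\<^sup>2"
    using \<open>1 < \<bar>s\<bar>\<close> one_less_power[of "\<bar>s\<bar>" 2] by simp
  moreover from this have "0 < s\<^sup>2"
    by linarith
  moreover have "s\<^sup>2 * (1 + E) \<le> 2"
    using inv \<open>E < 1\<close> by (smt (verit) mult_nonneg_nonneg zero_le_power2)
  moreover have "0 < s\<^sup>2 * E"
    using \<open>1 < s\<^sup>2\<close> \<open>0 < E\<close> by (intro mult_pos_pos) auto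
  ultimately have "E \<le> 2 / s\<^sup>2 - 1" "0 < 2 / s\<^sup>2 - 1" "2 / s\<^sup>2 - 1 < 1"
    by (simp_all add: field_simps)
  then show "0 < - ln (2 / s\<^sup>2 - 1)" and "- ln (2 / s\<^sup>2 - 1) \<le> - ln E"
    using \<open>0 < E\<close> by simp_all
qed

lemma momentum_difference_positive:
  assumes sol: "hamiltonian_solution q p" and ordered: "\<forall>u\<in>{0..T}. q u 2 < q u 1"
    and norm: "(p 0 1)\<^sup>2 + (p 0 2)\<^sup>2 + 2 * p 0 1 * p 0 2 * exp (- \<bar>q 0 1 - q 0 2\<bar>) = 1"
    and slow: "\<bar>p 0 1 + p 0 2\<bar> \<le> 1" and initial: "p 0 2 < p 0 1"
    and t: "t \<in> {0..T}"
  shows "p t 2 < p t 1"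
proof (rule ccontr)
  assume "\<not> p t 2 < p t 1"
  have "continuous_on {0..t} (\<lambda>u. p u 1 - p u 2)"
    using hamiltonian_solution_continuous_on(2)[OF sol, of 1] hamiltonian_solution_continuous_on(2)[OF sol, of 2]
    by (intro continuous_on_diff) (auto intro: continuous_on_subset)
  then obtain u where u: "0 \<le> u" "u \<le> t" "p u 1 - p u 2 = 0"
    using IVT2'[of "\<lambda>u. p u 1 - p u 2" t 0 0] \<open>\<not> p t 2 < p t 1\<close> initial t by auto
  then have "u \<in> {0..T}" "exp (- (q u 1 - q u 2)) < 1"
    using t ordered by auto
  moreover have "(p 0 1 + p 0 2)\<^sup>2 \<le> 1"
    using slow abs_square_le_1 by blast
  ultimately have "(p 0 1 + p 0 2)\<^sup>2 * (1 + exp (- (q u 1 - q u 2))) < 2"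
    by (smt (verit) mult_left_le_one_le exp_gt_zero zero_le_power2)
  then show False
    using collision_free_invariant[OF sol ordered norm \<open>u \<in> {0..T}\<close>] u by simp
qed

lemma separation_nondecreasing:
  assumes sol: "hamiltonian_solution q p" and ordered: "\<forall>u\<in>{0..T}. q u 2 < q u 1"
    and norm: "(p 0 1)\<^sup>2 + (p 0 2)\<^sup>2 + 2 * p 0 1 * p 0 2 * exp (- \<bar>q 0 1 - q 0 2\<bar>) = 1"
    and slow: "\<bar>p 0 1 + p 0 2\<bar> \<le> 1" and initial: "p 0 2 < p 0 1"
    and t: "t \<in> {0..T}"
  shows "q 0 1 - q 0 2 \<le> q t 1 - q t 2"
proof (rule DERIV_nonneg_imp_increasing_open[of 0 t "\<lambda>u. q u 1 - q u 2"])
  show "continuous_on {0..t} (\<lambda>u. q u 1 - q u 2)"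
    using hamiltonian_solution_continuous_on(1)[OF sol, of 1] hamiltonian_solution_continuous_on(1)[OF sol, of 2]
    by (intro continuous_on_diff) (auto intro: continuous_on_subset)
  fix u assume u: "0 < u" "u < t"
  then have "u \<in> {0..T}"
    using t by auto
  note ode = hamiltonian_solution_peakon_ode[OF sol _ ordered[rule_format, OF this]]
  have "((\<lambda>u. q u 1 - q u 2) has_real_derivative
      (p u 1 - p u 2) * (1 - exp (- (q u 1 - q u 2)))) (at u within {0<..})"
    using DERIV_diff[OF ode(1) ode(2)] u by (auto intro: DERIV_subset simp: algebra_simps)
  then have "((\<lambda>u. q u 1 - q u 2) has_real_derivative
      (p u 1 - p u 2) * (1 - exp (- (q u 1 - q u 2)))) (at u)"
    using at_within_open[of u "{0<..}"] u by simp
  moreover have "0 \<le> (p u 1 - p u 2) * (1 - exp (- (q u 1 - q u 2)))"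
  proof (rule mult_nonneg_nonneg)
    show "0 \<le> p u 1 - p u 2"
      using momentum_difference_positive[OF sol ordered norm slow initial \<open>u \<in> {0..T}\<close>] by simp
    show "0 \<le> 1 - exp (- (q u 1 - q u 2))"
      using ordered \<open>u \<in> {0..T}\<close> by force
  qed
  ultimately show "\<exists>y. ((\<lambda>u. q u 1 - q u 2) has_real_derivative y) (at u) \<and> 0 \<le> y"
    by blast
qed (use t in simp)

lemma positive_if_bounded_away_while_positive:
  fixes f :: "real \<Rightarrow> real"
  assumes cont: "continuous_on {0..} f" and "0 < f 0" "0 < \<delta>"
    and bound: "\<And>T t. \<forall>u\<in>{0..T}. 0 < f u \<Longrightarrow> t \<in> {0..T} \<Longrightarrow> \<delta> \<le> f t"
    and "0 \<le> t"
  shows "0 < f t"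
proof (rule ccontr)
  assume "\<not> 0 < f t"
  have "\<delta> \<le> f 0"
    using bound[of 0 0] \<open>0 < f 0\<close> by simp
  have IVT: "\<exists>x. 0 \<le> x \<and> x \<le> u \<and> f x = \<delta> / 2" if "0 \<le> u" "f u \<le> \<delta> / 2" for u
  proof (rule IVT2')
    show "continuous_on {0..u} f"
      using cont by (rule continuous_on_subset) auto
  qed (use that \<open>\<delta> \<le> f 0\<close> \<open>0 < \<delta>\<close> in auto)
  define S where "S = {x \<in> {0..t}. f x = \<delta> / 2}"
  have "S \<noteq> {}"
    using IVT[of t] \<open>\<not> 0 < f t\<close> \<open>0 < \<delta>\<close> \<open>0 \<le> t\<close> by (auto simp: S_def)
  have "closed S"
    unfolding S_def by (rule continuous_closed_preimage_constant[OF continuous_on_subset[OF cont]]) auto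
  moreover have "bounded S"
    unfolding S_def by (rule bounded_subset[of "{0..t}"]) auto
  ultimately have "compact S"
    by (simp add: compact_eq_bounded_closed)
  moreover note \<open>S \<noteq> {}\<close>
  ultimately obtain t\<^sub>0 where "t\<^sub>0 \<in> S" and first: "\<And>x. x \<in> S \<Longrightarrow> t\<^sub>0 \<le> x"
    using compact_attains_inf[of S] by auto
  have "0 < f u" if u: "u \<in> {0..t\<^sub>0}" for u
  proof (rule ccontr)
    assume "\<not> 0 < f u"
    have "t\<^sub>0 \<le> t" "f t\<^sub>0 = \<delta> / 2"
      using \<open>t\<^sub>0 \<in> S\<close> by (simp_all add: S_def)
    obtain x where "0 \<le> x" "x \<le> u" "f x = \<delta> / 2"
      using IVT[of u] u \<open>\<not> 0 < f u\<close> \<open>0 < \<delta>\<close> by fastforce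
    then have "x \<in> S"
      using u \<open>t\<^sub>0 \<le> t\<close> by (simp add: S_def)
    then have "u = t\<^sub>0"
      using first[of x] \<open>x \<le> u\<close> u by simp
    then show False
      using \<open>f t\<^sub>0 = \<delta> / 2\<close> \<open>\<not> 0 < f u\<close> \<open>0 < \<delta>\<close> by simp
  qed
  then have "\<delta> \<le> f t\<^sub>0"
    using bound[of t\<^sub>0 t\<^sub>0] \<open>t\<^sub>0 \<in> S\<close> by (auto simp: S_def)
  then show False
    using \<open>t\<^sub>0 \<in> S\<close> \<open>0 < \<delta>\<close> by (auto simp: S_def)
qed

lemma separation_bounded_away_while_collision_free:
  assumes sol: "hamiltonian_solution q p" and init: "q 0 2 < q 0 1"
    and norm: "(p 0 1)\<^sup>2 + (p 0 2)\<^sup>2 + 2 * p 0 1 * p 0 2 * exp (- \<bar>q 0 1 - q 0 2\<bar>) = 1"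
    and cond: "1 < \<bar>p 0 1 + p 0 2\<bar> \<or> 0 < p 0 1 - p 0 2"
  obtains \<delta> where "0 < \<delta>"
    and "\<And>T t. \<forall>u\<in>{0..T}. q u 2 < q u 1 \<Longrightarrow> t \<in> {0..T} \<Longrightarrow> \<delta> \<le> q t 1 - q t 2"
proof (cases "1 < \<bar>p 0 1 + p 0 2\<bar>")
  case True
  have "0 < - ln (2 / (p 0 1 + p 0 2)\<^sup>2 - 1)"
    using neg_ln_bound_of_invariant(1)[OF True exp_gt_zero _
        collision_free_invariant[OF sol _ norm, of 0 0]] init by simp
  moreover have "- ln (2 / (p 0 1 + p 0 2)\<^sup>2 - 1) \<le> q t 1 - q t 2"
    if ordered: "\<forall>u\<in>{0..T}. q u 2 < q u 1" and t: "t \<in> {0..T}" for T t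
    using neg_ln_bound_of_invariant(2)[OF True exp_gt_zero _
        collision_free_invariant[OF sol ordered norm t]] ordered t by simp
  ultimately show thesis
    by (rule that)
next
  case False
  with cond have "p 0 2 < p 0 1"
    by simp
  show thesis
    using separation_nondecreasing[OF sol _ norm _ \<open>p 0 2 < p 0 1\<close>] False init
    by (intro that[of "q 0 1 - q 0 2"]) simp_all
qed

theorem lemma2:
  fixes q p :: "real \<Rightarrow> nat \<Rightarrow> real"
  assumes sol: "hamiltonian_solution q p"
    and init: "q 0 1 > q 0 2"
    and norm: "(p 0 1)\<^sup>2 + (p 0 2)\<^sup>2 + 2 * p 0 1 * p 0 2 * exp (- \<bar>q 0 1 - q 0 2\<bar>) = 1"
    and cond: "\<bar>p 0 1 + p 0 2\<bar> > 1 \<or> p 0 1 - p 0 2 > 0"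
  shows "(\<exists>\<delta>>0. \<forall>t\<ge>0. \<bar>q t 1 - q t 2\<bar> \<ge> \<delta>) \<and> (\<forall>t\<ge>0. q t 1 > q t 2)"
proof -
  obtain \<delta> where "0 < \<delta>" and bound:
    "\<And>T t. \<forall>u\<in>{0..T}. q u 2 < q u 1 \<Longrightarrow> t \<in> {0..T} \<Longrightarrow> \<delta> \<le> q t 1 - q t 2"
    using separation_bounded_away_while_collision_free[OF sol init norm cond] by blast
  have "continuous_on {0..} (\<lambda>t. q t 1 - q t 2)"
    using hamiltonian_solution_continuous_on(1)[OF sol] by (intro continuous_on_diff) auto
  then have ordered: "0 < q t 1 - q t 2" if "0 \<le> t" for t
  proof (rule positive_if_bounded_away_while_positive[OF _ _ \<open>0 < \<delta>\<close>])
    show "\<delta> \<le> q t' 1 - q t' 2" if "\<forall>u\<in>{0..T}. 0 < q u 1 - q u 2" "t' \<in> {0..T}" for T t'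
      using bound that by simp
  qed (use init that in simp_all)
  moreover have "\<delta> \<le> \<bar>q t 1 - q t 2\<bar>" if "0 \<le> t" for t
  proof -
    have "\<delta> \<le> q t 1 - q t 2"
      by (rule bound[of t]) (use ordered that in auto)
    then show ?thesis
      by simp
  qed
  ultimately have "\<forall>t\<ge>0. q t 2 < q t 1" "\<forall>t\<ge>0. \<delta> \<le> \<bar>q t 1 - q t 2\<bar>"
    by simp_all
  then show ?thesis
    using \<open>0 < \<delta>\<close> by blast
qed

end
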